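(* Let $q$ be a prime power, $b$ a positive integer, and $M,D$ positive integers with $M>q^{b-1}$ and $D\ge b$. Then $N_b(M,D)\le N_H(M,D-b+1)$.
   Context: For $\boldsymbol{z}=(z_0,\ldots,z_{n-1}),\boldsymbol{w}\in\mathbb{F}_q^n$, $d_b(\boldsymbol{z},\boldsymbol{w})$ is the number of $i\in\{0,\ldots,n-1\}$ with $(z_i,\ldots,z_{i+b-1})\ne(w_i,\ldots,w_{i+b-1})$ (indices mod $n$). $N_b(M,D)$ is the smallest $r$ such that there exist $\boldsymbol{p}_1,\ldots,\boldsymbol{p}_M\in\mathbb{F}_q^r$ with $d_b(\boldsymbol{p}_i,\boldsymbol{p}_j)\ge D$ for all $i\ne j$; $N_H(M,D)$ is defined the same way with the Hamming distance $d_H$ in place of $d_b$. *)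

theory Defs
  imports Main
begin

text \<open>Vectors of F_q^n are lists of length n over a finite field type 'a (so q = CARD('a)).\<close>

definition dist_b :: "nat \<Rightarrow> 'a list \<Rightarrow> 'a list \<Rightarrow> nat" where
  "dist_b b z w = (let n = length z in
     card {i. i < n \<and> (\<exists>j<b. z ! ((i + j) mod n) \<noteq> w ! ((i + j) mod n))})"

definition dist_H :: "'a list \<Rightarrow> 'a list \<Rightarrow> nat" where
  "dist_H z w = card {i. i < length z \<and> z ! i \<noteq> w ! i}"

definition N_b :: "'a itself \<Rightarrow> nat \<Rightarrow> nat \<Rightarrow> nat \<Rightarrow> nat" where
  "N_b (_ :: 'a itself) b M D = (LEAST r. \<exists>p :: nat \<Rightarrow> 'a list.
      (\<forall>i\<in>{1..M}. length (p i) = r) \<and>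
      (\<forall>i\<in>{1..M}. \<forall>j\<in>{1..M}. i \<noteq> j \<longrightarrow> dist_b b (p i) (p j) \<ge> D))"

definition N_H :: "'a itself \<Rightarrow> nat \<Rightarrow> nat \<Rightarrow> nat" where
  "N_H (_ :: 'a itself) M D = (LEAST r. \<exists>p :: nat \<Rightarrow> 'a list.
      (\<forall>i\<in>{1..M}. length (p i) = r) \<and>
      (\<forall>i\<in>{1..M}. \<forall>j\<in>{1..M}. i \<noteq> j \<longrightarrow> dist_H (p i) (p j) \<ge> D))"

end

theory Submission
  imports Defs
begin

text \<open>
  Take a Hamming code of optimal length r with minimum distance D - b + 1. It has more than
  q^(b-1) words, so two of them agree on their first b - 1 coordinates, which forces r \<ge> D
  (Singleton bound). For the burst distance, the windows of length b that meet the set S of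
  positions where two words differ grow by at least one element each time b increases, as long as
  they do not yet cover all positions; hence d_b \<ge> min r (d_H + b - 1) \<ge> D, and the same code
  witnesses N_b(M, D) \<le> r.
\<close>

definition burst_cover :: "nat \<Rightarrow> nat set \<Rightarrow> nat \<Rightarrow> nat set" where
  "burst_cover n S b = {i. i < n \<and> (\<exists>j<b. (i + j) mod n \<in> S)}"

lemma burst_cover_subset: "burst_cover n S b \<subseteq> {..<n}"
  unfolding burst_cover_def by auto

lemma burst_cover_one: "S \<subseteq> {..<n} \<Longrightarrow> burst_cover n S 1 = S"
  unfolding burst_cover_def by auto

lemma burst_cover_mono: "b \<le> b' \<Longrightarrow> burst_cover n S b \<subseteq> burst_cover n S b'"
  unfolding burst_cover_def by (blast intro: order_less_le_trans)

lemma burst_cover_SucI: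
  assumes "x < n" and "Suc x mod n \<in> burst_cover n S b"
  shows "x \<in> burst_cover n S (Suc b)"
proof -
  obtain j where "j < b" and "(Suc x mod n + j) mod n \<in> S"
    using assms(2) unfolding burst_cover_def by auto
  moreover have "(Suc x mod n + j) mod n = (x + Suc j) mod n"
    by (simp add: mod_add_left_eq)
  ultimately show ?thesis
    using assms(1) unfolding burst_cover_def by auto
qed

lemma ex_cyclic_entry:
  assumes "a \<in> A" "a < n" "c \<notin> A" "c < n"
  shows "\<exists>x<n. x \<notin> A \<and> Suc x mod n \<in> A"
proof -
  define f where "f k = (c + k) mod n" for k
  have "f ((a + n - c) mod n) \<in> A"
    using assms(1,2,4) unfolding f_def by (simp add: mod_add_right_eq)
  moreover have "f 0 \<notin> A"
    using assms(3,4) unfolding f_def by simp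
  ultimately obtain k where "f k \<notin> A" "f (Suc k) \<in> A"
    using ex_least_nat_less[of "\<lambda>k. f k \<in> A"] by auto
  moreover have "Suc (f k) mod n = f (Suc k)"
    unfolding f_def by (simp add: mod_Suc_eq)
  moreover have "f k < n"
    using assms(4) unfolding f_def by simp
  ultimately show ?thesis by metis
qed

lemma card_burst_cover:
  assumes "S \<subseteq> {..<n}" and "S \<noteq> {}"
  shows "min n (card S + b) \<le> card (burst_cover n S (Suc b))"
proof (induction b)
  case 0
  have "card S \<le> n"
    using card_mono[OF finite_lessThan assms(1)] by simp
  then show ?case using burst_cover_one[OF assms(1)] by simp
next
  case (Suc b)
  let ?T = "burst_cover n S (Suc b)" and ?T' = "burst_cover n S (Suc (Suc b))"
  have "?T \<subseteq> ?T'"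
    by (rule burst_cover_mono) simp
  have "finite ?T'"
    by (rule finite_subset[OF burst_cover_subset]) simp
  show ?case
  proof (cases "?T = {..<n}")
    case True
    then have "?T' = {..<n}"
      using \<open>?T \<subseteq> ?T'\<close> burst_cover_subset[of n S "Suc (Suc b)"] by blast
    then show ?thesis by simp
  next
    case False
    then obtain c where "c < n" "c \<notin> ?T"
      using burst_cover_subset[of n S "Suc b"] by blast
    have "S \<subseteq> ?T"
      using burst_cover_mono[of 1 "Suc b" n S] burst_cover_one[OF assms(1)] by simp
    then obtain a where "a \<in> ?T" "a < n"
      using assms by blast
    then obtain x where "x < n" "x \<notin> ?T" "Suc x mod n \<in> ?T"
      using ex_cyclic_entry[of a ?T n c] \<open>c < n\<close> \<open>c \<notin> ?T\<close> by blast
    then have "insert x ?T \<subseteq> ?T'"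
      using burst_cover_SucI[of x n S "Suc b"] \<open>?T \<subseteq> ?T'\<close> by blast
    then have "card (insert x ?T) \<le> card ?T'"
      by (rule card_mono[OF \<open>finite ?T'\<close>])
    moreover have "finite ?T"
      by (rule finite_subset[OF burst_cover_subset]) simp
    ultimately show ?thesis
      using Suc.IH \<open>x \<notin> ?T\<close> by simp
  qed
qed

lemma dist_b_eq_card_burst_cover:
  "dist_b b z w = card (burst_cover (length z) {i. i < length z \<and> z ! i \<noteq> w ! i} b)"
proof -
  have "(i + j) mod length z < length z" if "i < length z" for i j
    using that by (intro mod_less_divisor) linarith
  then show ?thesis
    unfolding dist_b_def burst_cover_def Let_def by (intro arg_cong[where f = card]) blast
qed

lemma dist_b_ge_dist_H:
  assumes "dist_H z w > 0" and "b > 0"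
  shows "min (length z) (dist_H z w + b - 1) \<le> dist_b b z w"
proof -
  define S where "S = {i. i < length z \<and> z ! i \<noteq> w ! i}"
  have "dist_H z w = card S"
    unfolding dist_H_def S_def ..
  then have "S \<noteq> {}"
    using assms(1) by auto
  obtain b' where "b = Suc b'"
    using assms(2) gr0_conv_Suc by blast
  have "S \<subseteq> {..<length z}"
    unfolding S_def by blast
  moreover have "dist_b b z w = card (burst_cover (length z) S b)"
    unfolding S_def by (rule dist_b_eq_card_burst_cover)
  ultimately show ?thesis
    using card_burst_cover[of S "length z" b'] \<open>S \<noteq> {}\<close> \<open>dist_H z w = card S\<close> \<open>b = Suc b'\<close>
    by simp
qed

lemma dist_H_le_of_take_eq:
  assumes "take k z = take k w"
  shows "dist_H z w \<le> length z - k"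
proof -
  have "k \<le> i" if "z ! i \<noteq> w ! i" for i
    using that assms by (metis not_le nth_take)
  then have "{i. i < length z \<and> z ! i \<noteq> w ! i} \<subseteq> {k..<length z}"
    by auto
  then show ?thesis
    unfolding dist_H_def using card_mono[OF finite_atLeastLessThan] by fastforce
qed

lemma singleton_bound:
  fixes p :: "nat \<Rightarrow> 'a::finite list"
  assumes "card (UNIV :: 'a set) ^ k < card I"
    and "\<forall>i\<in>I. length (p i) = r"
    and "\<forall>i\<in>I. \<forall>j\<in>I. i \<noteq> j \<longrightarrow> d \<le> dist_H (p i) (p j)"
    and "d > 0"
  shows "k + d \<le> r"
proof -
  define k' where "k' = min r k"
  let ?W = "{xs :: 'a list. set xs \<subseteq> UNIV \<and> length xs = k'}"
  have "card ?W = card (UNIV :: 'a set) ^ k'"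
    by (rule card_lists_length_eq) simp
  also have "\<dots> \<le> card (UNIV :: 'a set) ^ k"
    unfolding k'_def by (rule power_increasing) (simp_all add: Suc_le_eq finite_UNIV_card_ge_0)
  finally have "card ?W < card I"
    using assms(1) by linarith
  moreover have "(\<lambda>i. take k' (p i)) ` I \<subseteq> ?W"
    using assms(2) unfolding k'_def by auto
  ultimately have "\<not> inj_on (\<lambda>i. take k' (p i)) I"
    using card_inj_on_le[OF _ _ finite_lists_length_eq] by fastforce
  then obtain i j where "i \<in> I" "j \<in> I" "i \<noteq> j" "take k' (p i) = take k' (p j)"
    unfolding inj_on_def by blast
  then have "d \<le> r - k'"
    using dist_H_le_of_take_eq[of k' "p i" "p j"] assms(2,3) by fastforce
  then show ?thesis
    using assms(4) unfolding k'_def by linarith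
qed

lemma ex_code_dist_H:
  "\<exists>p :: nat \<Rightarrow> 'a::zero_neq_one list. (\<forall>i\<in>{1..M}. length (p i) = (M + 1) * d) \<and>
      (\<forall>i\<in>{1..M}. \<forall>j\<in>{1..M}. i \<noteq> j \<longrightarrow> d \<le> dist_H (p i) (p j))"
proof -
  define p :: "nat \<Rightarrow> 'a list" where
    "p i = map (\<lambda>k. if k div d = i then 1 else 0) [0..<(M + 1) * d]" for i
  have "d \<le> dist_H (p i) (p j)" if "i \<in> {1..M}" "i \<noteq> j" for i j
  proof -
    have "{i * d..<i * d + d} \<subseteq> {k. k < length (p i) \<and> p i ! k \<noteq> p j ! k}"
    proof
      fix k assume k: "k \<in> {i * d..<i * d + d}"
      have "i * d + d \<le> (M + 1) * d"
        using that(1) mult_le_mono1[of i M d] by simp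
      moreover have "k < i * d + d"
        using k by simp
      ultimately have "k < (M + 1) * d"
        by linarith
      moreover have "k div d = i"
        using k by (intro div_nat_eqI) (auto simp: mult.commute)
      ultimately show "k \<in> {k. k < length (p i) \<and> p i ! k \<noteq> p j ! k}"
        using that(2) by (simp add: p_def)
    qed
    from card_mono[OF _ this] show ?thesis
      unfolding dist_H_def by simp
  qed
  then show ?thesis
    by (intro exI[of _ p]) (simp add: p_def)
qed

lemma N_H_attained:
  "\<exists>p :: nat \<Rightarrow> 'a::zero_neq_one list. (\<forall>i\<in>{1..M}. length (p i) = N_H TYPE('a) M d) \<and>
      (\<forall>i\<in>{1..M}. \<forall>j\<in>{1..M}. i \<noteq> j \<longrightarrow> d \<le> dist_H (p i) (p j))"
  unfolding N_H_def by (rule LeastI_ex) (use ex_code_dist_H in blast)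

theorem lemma4p5:
  fixes b M D :: nat
  assumes "b > 0" and "M > 0" and "D > 0"
    and "M > card (UNIV :: 'a set) ^ (b - 1)"
    and "D \<ge> b"
  shows "N_b TYPE('a::{finite,field}) b M D \<le> N_H TYPE('a) M (D - b + 1)"
proof -
  let ?r = "N_H TYPE('a) M (D - b + 1)"
  obtain p :: "nat \<Rightarrow> 'a list" where len: "\<forall>i\<in>{1..M}. length (p i) = ?r"
    and dist: "\<forall>i\<in>{1..M}. \<forall>j\<in>{1..M}. i \<noteq> j \<longrightarrow> D - b + 1 \<le> dist_H (p i) (p j)"
    using N_H_attained by blast
  have "b - 1 + (D - b + 1) \<le> ?r"
    by (rule singleton_bound[OF _ len dist]) (use assms(4) in simp_all)
  then have "D \<le> ?r"
    using assms(1,5) by linarith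
  have "D \<le> dist_b b (p i) (p j)" if "i \<in> {1..M}" "j \<in> {1..M}" "i \<noteq> j" for i j
  proof -
    have "D - b + 1 \<le> dist_H (p i) (p j)"
      using dist that by blast
    moreover have "min ?r (dist_H (p i) (p j) + b - 1) \<le> dist_b b (p i) (p j)"
      using dist_b_ge_dist_H[of "p i" "p j" b] len that(1) assms(1) calculation by simp
    ultimately show ?thesis
      using \<open>D \<le> ?r\<close> assms(5) by linarith
  qed
  then show ?thesis
    unfolding N_b_def using len by (intro Least_le) blast
qed

end
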